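(* Let $A_1$ and $A_2$ be simple and covering atoms that are unifiable with a most general unifier $\sigma$, and suppose $A_1$ contains a compound term. Let $G$ be a flat literal and $\mathcal G$ a set of flat literals such that $\mathrm{Var}(A_1)=\mathrm{Var}(G)=\mathrm{Var}(\mathcal G)$. Then $G\sigma$ and every literal of $\mathcal G\sigma$ are flat, and $\mathrm{Var}(A_1\sigma)=\mathrm{Var}(G\sigma)=\mathrm{Var}(\mathcal G\sigma)$.
   Context: A compound term is a term that is neither a variable nor a constant. $\mathrm{Var}(E)$ denotes the set of variables of $E$. A literal is flat if each argument is a variable or a constant; it is simple if each argument is a variable, a constant, or a term $f(u_1,\dots,u_n)$ with each $u_i$ a variable or a constant. A literal is covering if every compound term $t$ occurring in it satisfies $\mathrm{Var}(t)$ equal to the set of variables of the literal (flat literals are trivially covering). *)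

theory Defs
  imports Main
begin

datatype ('f, 'v) trm = Var 'v | Fun 'f "('f, 'v) trm list"

datatype ('p, 'f, 'v) atom = Atom 'p "('f, 'v) trm list"

datatype ('p, 'f, 'v) literal = Pos "('p, 'f, 'v) atom" | Neg "('p, 'f, 'v) atom"

fun vars_trm :: "('f, 'v) trm \<Rightarrow> 'v set" where
  "vars_trm (Var x) = {x}"
| "vars_trm (Fun f ts) = (\<Union>t\<in>set ts. vars_trm t)"

fun args_atom :: "('p, 'f, 'v) atom \<Rightarrow> ('f, 'v) trm list" where
  "args_atom (Atom p ts) = ts"

fun atom_of :: "('p, 'f, 'v) literal \<Rightarrow> ('p, 'f, 'v) atom" where
  "atom_of (Pos a) = a"
| "atom_of (Neg a) = a"

definition vars_atom :: "('p, 'f, 'v) atom \<Rightarrow> 'v set" where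
  "vars_atom A = (\<Union>t\<in>set (args_atom A). vars_trm t)"

definition vars_lit :: "('p, 'f, 'v) literal \<Rightarrow> 'v set" where
  "vars_lit L = vars_atom (atom_of L)"

definition vars_lits :: "('p, 'f, 'v) literal set \<Rightarrow> 'v set" where
  "vars_lits Ls = (\<Union>L\<in>Ls. vars_lit L)"

fun subterms :: "('f, 'v) trm \<Rightarrow> ('f, 'v) trm set" where
  "subterms (Var x) = {Var x}"
| "subterms (Fun f ts) = insert (Fun f ts) (\<Union>t\<in>set ts. subterms t)"

definition is_var :: "('f, 'v) trm \<Rightarrow> bool" where
  "is_var t \<longleftrightarrow> (\<exists>x. t = Var x)"

definition is_const :: "('f, 'v) trm \<Rightarrow> bool" where
  "is_const t \<longleftrightarrow> (\<exists>c. t = Fun c [])"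

definition is_compound :: "('f, 'v) trm \<Rightarrow> bool" where
  "is_compound t \<longleftrightarrow> \<not> is_var t \<and> \<not> is_const t"

definition var_or_const :: "('f, 'v) trm \<Rightarrow> bool" where
  "var_or_const t \<longleftrightarrow> is_var t \<or> is_const t"

definition flat_atom :: "('p, 'f, 'v) atom \<Rightarrow> bool" where
  "flat_atom A \<longleftrightarrow> (\<forall>t\<in>set (args_atom A). var_or_const t)"

definition flat_lit :: "('p, 'f, 'v) literal \<Rightarrow> bool" where
  "flat_lit L \<longleftrightarrow> flat_atom (atom_of L)"

definition simple_atom :: "('p, 'f, 'v) atom \<Rightarrow> bool" where
  "simple_atom A \<longleftrightarrow> (\<forall>t\<in>set (args_atom A).
      var_or_const t \<or> (\<exists>f us. t = Fun f us \<and> (\<forall>u\<in>set us. var_or_const u)))"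

definition subterms_atom :: "('p, 'f, 'v) atom \<Rightarrow> ('f, 'v) trm set" where
  "subterms_atom A = (\<Union>t\<in>set (args_atom A). subterms t)"

definition covering_atom :: "('p, 'f, 'v) atom \<Rightarrow> bool" where
  "covering_atom A \<longleftrightarrow>
     (\<forall>t\<in>subterms_atom A. is_compound t \<longrightarrow> vars_trm t = vars_atom A)"

definition contains_compound :: "('p, 'f, 'v) atom \<Rightarrow> bool" where
  "contains_compound A \<longleftrightarrow> (\<exists>t\<in>subterms_atom A. is_compound t)"

type_synonym ('f, 'v) subst = "'v \<Rightarrow> ('f, 'v) trm"

fun subst_trm :: "('f, 'v) trm \<Rightarrow> ('f, 'v) subst \<Rightarrow> ('f, 'v) trm" where
  "subst_trm (Var x) \<sigma> = \<sigma> x"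
| "subst_trm (Fun f ts) \<sigma> = Fun f (map (\<lambda>t. subst_trm t \<sigma>) ts)"

fun subst_atom :: "('p, 'f, 'v) atom \<Rightarrow> ('f, 'v) subst \<Rightarrow> ('p, 'f, 'v) atom" where
  "subst_atom (Atom p ts) \<sigma> = Atom p (map (\<lambda>t. subst_trm t \<sigma>) ts)"

fun subst_lit :: "('p, 'f, 'v) literal \<Rightarrow> ('f, 'v) subst \<Rightarrow> ('p, 'f, 'v) literal" where
  "subst_lit (Pos a) \<sigma> = Pos (subst_atom a \<sigma>)"
| "subst_lit (Neg a) \<sigma> = Neg (subst_atom a \<sigma>)"

definition subst_lits :: "('p, 'f, 'v) literal set \<Rightarrow> ('f, 'v) subst \<Rightarrow> ('p, 'f, 'v) literal set" where
  "subst_lits Ls \<sigma> = (\<lambda>L. subst_lit L \<sigma>) ` Ls"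

definition is_unifier :: "('f, 'v) subst \<Rightarrow> ('p, 'f, 'v) atom \<Rightarrow> ('p, 'f, 'v) atom \<Rightarrow> bool" where
  "is_unifier \<sigma> A B \<longleftrightarrow> subst_atom A \<sigma> = subst_atom B \<sigma>"

definition is_mgu :: "('f, 'v) subst \<Rightarrow> ('p, 'f, 'v) atom \<Rightarrow> ('p, 'f, 'v) atom \<Rightarrow> bool" where
  "is_mgu \<sigma> A B \<longleftrightarrow> is_unifier \<sigma> A B \<and>
     (\<forall>\<tau>. is_unifier \<tau> A B \<longrightarrow> (\<exists>\<delta>. \<forall>x. \<tau> x = subst_trm (\<sigma> x) \<delta>))"

end

theory Submission
  imports Defs
begin

text \<open>If \<open>\<sigma>\<close> mapped some variable of \<open>A\<^sub>1\<close> to a compound term, then, \<open>\<sigma>\<close> being most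
  general, every unifier would. So it suffices to exhibit one unifier \<open>\<theta>\<close> sending
  \<open>Var(A\<^sub>1)\<close> to variables and constants; flatness and the variable equalities then
  transfer from \<open>G\<close> and \<open>\<G>\<close>. The unifier \<open>\<theta>\<close> is obtained from \<open>\<sigma>\<close> by cutting terms
  off below the first level (images of \<open>Var(A\<^sub>1)\<close>) or below the second level (all
  other images). That this still unifies rests on a size argument: every variable
  of a simple covering atom occurs as a direct argument of each of its compound
  arguments, so its image under \<open>\<sigma>\<close> is strictly smaller than theirs.\<close>

lemma var_or_const_simps [simp]:
  "var_or_const (Var x)"
  "var_or_const (Fun f ts) \<longleftrightarrow> ts = []"
  by (auto simp: var_or_const_def is_var_def is_const_def)

lemma is_compound_iff: "is_compound t \<longleftrightarrow> \<not> var_or_const t"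
  by (simp add: is_compound_def var_or_const_def)

lemma var_or_const_cases [consumes 1, case_names Var Const]:
  assumes "var_or_const t"
  obtains x where "t = Var x" | c where "t = Fun c []"
  using assms by (cases t) auto

lemma var_or_const_subst_trmD: "var_or_const (subst_trm t \<sigma>) \<Longrightarrow> var_or_const t"
  by (cases t) auto

lemma var_or_const_subst_trm:
  "var_or_const t \<Longrightarrow> \<forall>x\<in>vars_trm t. var_or_const (\<sigma> x) \<Longrightarrow> var_or_const (subst_trm t \<sigma>)"
  by (cases t) auto

lemma size_arg_less: "t \<in> set ts \<Longrightarrow> size t < size (Fun f ts)"
  by (induct ts) auto

lemma size_subst_var_less:
  "Var x \<in> set us \<Longrightarrow> size (\<sigma> x) < size (subst_trm (Fun f us) \<sigma>)"
  by (metis image_eqI list.set_map size_arg_less subst_trm.simps)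

lemma subterms_self: "t \<in> subterms t"
  by (cases t) auto

lemma subterms_var_or_const: "var_or_const t \<Longrightarrow> subterms t = {t}"
  by (cases rule: var_or_const_cases) auto

lemma vars_subst_trm: "vars_trm (subst_trm t \<sigma>) = (\<Union>x\<in>vars_trm t. vars_trm (\<sigma> x))"
  by (induct t) auto

lemma vars_trm_subset_vars_atom: "t \<in> set (args_atom A) \<Longrightarrow> vars_trm t \<subseteq> vars_atom A"
  by (auto simp: vars_atom_def)

lemma is_unifier_arg_pair:
  assumes "is_unifier \<sigma> A B" and "(s, t) \<in> set (zip (args_atom A) (args_atom B))"
  shows "subst_trm s \<sigma> = subst_trm t \<sigma>"
proof -
  have "map (\<lambda>t. subst_trm t \<sigma>) (args_atom A) = map (\<lambda>t. subst_trm t \<sigma>) (args_atom B)"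
    using assms(1) by (cases A, cases B) (simp add: is_unifier_def)
  moreover obtain n where "n < length (args_atom A)" "args_atom A ! n = s" "args_atom B ! n = t"
    using assms(2) by (auto simp: in_set_zip)
  ultimately show ?thesis
    by (metis length_map nth_map)
qed

lemma is_unifier_arg_partner:
  assumes "is_unifier \<sigma> A B" and "s \<in> set (args_atom A)"
  obtains t where "(s, t) \<in> set (zip (args_atom A) (args_atom B))"
proof -
  have "length (args_atom A) = length (args_atom B)"
    using assms(1) by (cases A, cases B) (auto simp: is_unifier_def dest: map_eq_imp_length_eq)
  then show thesis
    using assms(2) that by (metis in_set_conv_nth in_set_zip fst_conv snd_conv)
qed

lemma is_unifier_argwiseI:
  assumes "is_unifier \<sigma> A B"
    and "\<And>s t. (s, t) \<in> set (zip (args_atom A) (args_atom B)) \<Longrightarrow>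
      subst_trm s \<sigma> = subst_trm t \<sigma> \<Longrightarrow> subst_trm s \<theta> = subst_trm t \<theta>"
  shows "is_unifier \<theta> A B"
proof -
  obtain p ss q ts where A: "A = Atom p ss" and B: "B = Atom q ts"
    by (cases A, cases B) auto
  have "p = q" and "length ss = length ts"
    using assms(1) by (auto simp: A B is_unifier_def dest: map_eq_imp_length_eq)
  moreover have "subst_trm (ss ! n) \<theta> = subst_trm (ts ! n) \<theta>" if "n < length ss" for n
  proof -
    have "(ss ! n, ts ! n) \<in> set (zip ss ts)"
      using that \<open>length ss = length ts\<close> by (auto simp: in_set_zip)
    then show ?thesis
      using assms is_unifier_arg_pair[OF assms(1)] by (simp add: A B)
  qed
  ultimately show ?thesis
    by (auto simp: A B is_unifier_def intro!: nth_equalityI)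
qed

lemma simple_covering_compound_arg:
  assumes "simple_atom A" and "covering_atom A"
    and "D \<in> set (args_atom A)" and "is_compound D"
  obtains f us where "D = Fun f us" and "us \<noteq> []" and "\<forall>u\<in>set us. var_or_const u"
    and "\<forall>x\<in>vars_atom A. Var x \<in> set us"
proof -
  obtain f us where D: "D = Fun f us" and us: "\<forall>u\<in>set us. var_or_const u"
    using assms(1,3,4) by (auto simp: simple_atom_def is_compound_iff)
  have "D \<in> subterms_atom A"
    using assms(3) subterms_self by (auto simp: subterms_atom_def)
  then have "vars_trm D = vars_atom A"
    using assms(2,4) by (simp add: covering_atom_def)
  then have "\<forall>x\<in>vars_atom A. Var x \<in> set us"
    using us by (fastforce simp: D elim: var_or_const_cases)
  then show thesis
    using that D us assms(4) by (auto simp: is_compound_iff)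
qed

lemma size_subst_var_less_compound_arg:
  assumes "simple_atom A" and "covering_atom A"
    and "D \<in> set (args_atom A)" and "is_compound D" and "x \<in> vars_atom A"
  shows "size (\<sigma> x) < size (subst_trm D \<sigma>)"
  using assms by (metis simple_covering_compound_arg size_subst_var_less)

lemma subst_compound_arg_not_var_or_const:
  assumes "simple_atom A" and "covering_atom A"
    and "D \<in> set (args_atom A)" and "is_compound D"
  shows "\<not> var_or_const (subst_trm D \<sigma>)"
  using assms by (metis simple_covering_compound_arg subst_trm.simps(2)
      var_or_const_simps(2) Nil_is_map_conv)

lemma simple_contains_compound_arg:
  assumes "simple_atom A" and "contains_compound A"
  obtains C where "C \<in> set (args_atom A)" and "is_compound C"
proof -
  obtain t u where t: "t \<in> set (args_atom A)" and u: "u \<in> subterms t" "is_compound u"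
    using assms(2) by (auto simp: contains_compound_def subterms_atom_def)
  have "var_or_const t \<or> (\<exists>f us. t = Fun f us \<and> (\<forall>u\<in>set us. var_or_const u))"
    using assms(1) t by (simp add: simple_atom_def)
  then have "u = t"
    using u by (auto simp: is_compound_iff subterms_var_or_const)
  then show thesis
    using that t u by blast
qed

lemma arg_of_subst_flat_args:
  assumes "a \<in> set (map (\<lambda>w. subst_trm w \<sigma>) ws)" and "\<forall>w\<in>set ws. var_or_const w"
  shows "var_or_const a \<or> (\<exists>v\<in>vars_trm (Fun g ws). a = \<sigma> v)"
proof -
  obtain w where w: "w \<in> set ws" "a = subst_trm w \<sigma>"
    using assms(1) by auto
  from assms(2) w(1) have "var_or_const w" by blast
  then show ?thesis
    using w by (cases rule: var_or_const_cases) force+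
qed

lemma unifier_subst_var_bounded:
  assumes s1: "simple_atom A1" and c1: "covering_atom A1"
    and s2: "simple_atom A2" and u: "is_unifier \<sigma> A1 A2"
    and cc: "contains_compound A1" and y: "y \<in> vars_atom A1"
  shows "var_or_const (\<sigma> y) \<or> (\<exists>w\<in>vars_atom A2. size (\<sigma> y) \<le> size (\<sigma> w))"
proof -
  obtain C where C_in: "C \<in> set (args_atom A1)" and C: "is_compound C"
    using simple_contains_compound_arg[OF s1 cc] .
  obtain f us where Cfu: "C = Fun f us" and y_us: "Var y \<in> set us"
    using simple_covering_compound_arg[OF s1 c1 C_in C] y by metis
  obtain t where Ct: "(C, t) \<in> set (zip (args_atom A1) (args_atom A2))"
    using is_unifier_arg_partner[OF u C_in] .
  have Ct_eq: "subst_trm C \<sigma> = subst_trm t \<sigma>"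
    using is_unifier_arg_pair[OF u Ct] .
  have t_in: "t \<in> set (args_atom A2)"
    using Ct by (rule set_zip_rightD)
  show ?thesis
  proof (cases "var_or_const t")
    case True
    then show ?thesis
    proof (cases rule: var_or_const_cases)
      case (Var z)
      have "\<sigma> z = subst_trm C \<sigma>"
        using Ct_eq Var by simp
      then have "size (\<sigma> y) < size (\<sigma> z)"
        using size_subst_var_less[OF y_us, of \<sigma> f] Cfu by simp
      moreover have "z \<in> vars_atom A2"
        using vars_trm_subset_vars_atom[OF t_in] Var by simp
      ultimately show ?thesis
        by force
    next
      case Const
      then have "var_or_const (subst_trm C \<sigma>)"
        unfolding Ct_eq by simp
      with subst_compound_arg_not_var_or_const[OF s1 c1 C_in C] show ?thesis
        by contradiction
    qed
  next
    case False
    then obtain g ws where tgws: "t = Fun g ws" and ws: "\<forall>w\<in>set ws. var_or_const w"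
      using s2 t_in by (auto simp: simple_atom_def)
    have args: "map (\<lambda>u. subst_trm u \<sigma>) us = map (\<lambda>w. subst_trm w \<sigma>) ws"
      using Ct_eq by (simp add: Cfu tgws)
    have "\<sigma> y \<in> set (map (\<lambda>u. subst_trm u \<sigma>) us)"
      using y_us by force
    then have "\<sigma> y \<in> set (map (\<lambda>w. subst_trm w \<sigma>) ws)"
      by (simp only: args)
    then have "var_or_const (\<sigma> y) \<or> (\<exists>v\<in>vars_trm t. \<sigma> y = \<sigma> v)"
      using ws unfolding tgws by (rule arg_of_subst_flat_args)
    then show ?thesis
      using vars_trm_subset_vars_atom[OF t_in] by force
  qed
qed

text \<open>This is where \<open>contains_compound A\<^sub>1\<close> is needed: without it, \<open>A\<^sub>1 = P(x)\<close> and
  \<open>A\<^sub>2 = P(f(y))\<close> would be a counterexample.\<close>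

lemma unifier_var_or_const_arg_not_compound:
  assumes s1: "simple_atom A1" and c1: "covering_atom A1"
    and s2: "simple_atom A2" and c2: "covering_atom A2"
    and u: "is_unifier \<sigma> A1 A2" and cc: "contains_compound A1"
    and st: "(s, t) \<in> set (zip (args_atom A1) (args_atom A2))" and s: "var_or_const s"
  shows "\<not> is_compound t"
proof
  assume t: "is_compound t"
  have t_in: "t \<in> set (args_atom A2)" and s_in: "s \<in> set (args_atom A1)"
    using st by (auto dest: set_zip_leftD set_zip_rightD)
  have st_eq: "subst_trm s \<sigma> = subst_trm t \<sigma>"
    using is_unifier_arg_pair[OF u st] .
  have s_nvc: "\<not> var_or_const (subst_trm s \<sigma>)"
    unfolding st_eq by (rule subst_compound_arg_not_var_or_const[OF s2 c2 t_in t])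
  obtain y where y: "s = Var y"
    using s s_nvc by (cases rule: var_or_const_cases) auto
  have "y \<in> vars_atom A1"
    using vars_trm_subset_vars_atom[OF s_in] y by simp
  moreover have "size (\<sigma> w) < size (\<sigma> y)" if "w \<in> vars_atom A2" for w
    using size_subst_var_less_compound_arg[OF s2 c2 t_in t that] st_eq y by simp
  ultimately show False
    using unifier_subst_var_bounded[OF s1 c1 s2 u cc] s_nvc y by force
qed

definition truncate_trm :: "('f, 'v) trm \<Rightarrow> ('f, 'v) trm" where
  "truncate_trm t = (if var_or_const t then t else Var undefined)"

fun truncate_args :: "('f, 'v) trm \<Rightarrow> ('f, 'v) trm" where
  "truncate_args (Var x) = Var x"
| "truncate_args (Fun f ts) = Fun f (map truncate_trm ts)"

definition truncate_outside :: "('f, 'v) trm set \<Rightarrow> ('f, 'v) trm \<Rightarrow> ('f, 'v) trm" where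
  "truncate_outside T t = (if t \<in> T then truncate_trm t else truncate_args t)"

definition truncated_subst :: "('f, 'v) subst \<Rightarrow> 'v set \<Rightarrow> ('f, 'v) subst" where
  "truncated_subst \<sigma> V x = truncate_outside (\<sigma> ` V) (\<sigma> x)"

lemma var_or_const_truncated_subst: "x \<in> V \<Longrightarrow> var_or_const (truncated_subst \<sigma> V x)"
  by (simp add: truncated_subst_def truncate_outside_def truncate_trm_def)

lemma truncate_outside_const [simp]: "truncate_outside T (Fun c []) = Fun c []"
  by (simp add: truncate_outside_def truncate_trm_def)

lemma subst_trm_truncated_subst_var_or_const:
  "var_or_const u \<Longrightarrow>
     subst_trm u (truncated_subst \<sigma> V) = truncate_outside (\<sigma> ` V) (subst_trm u \<sigma>)"
  by (cases rule: var_or_const_cases) (auto simp: truncated_subst_def)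

lemma map_subst_trm_truncated_subst:
  "\<forall>u\<in>set us. var_or_const u \<Longrightarrow>
     map (\<lambda>u. subst_trm u (truncated_subst \<sigma> V)) us =
       map (truncate_outside (\<sigma> ` V)) (map (\<lambda>u. subst_trm u \<sigma>) us)"
  by (simp add: subst_trm_truncated_subst_var_or_const)

text \<open>The compound arguments of \<open>A\<^sub>1\<close> are cut off below the second level: their
  \<open>\<sigma>\<close>-images are too large to be images of variables of \<open>A\<^sub>1\<close>.\<close>

lemma subst_trm_truncated_subst_arg:
  assumes s1: "simple_atom A1" and c1: "covering_atom A1" and s_in: "s \<in> set (args_atom A1)"
  shows "subst_trm s (truncated_subst \<sigma> (vars_atom A1)) =
    truncate_outside (\<sigma> ` vars_atom A1) (subst_trm s \<sigma>)"
proof (cases "var_or_const s")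
  case True
  then show ?thesis
    by (rule subst_trm_truncated_subst_var_or_const)
next
  case False
  then have s: "is_compound s"
    by (simp add: is_compound_iff)
  obtain f us where sfus: "s = Fun f us" and us: "\<forall>u\<in>set us. var_or_const u"
    using simple_covering_compound_arg[OF s1 c1 s_in s] by metis
  have "subst_trm s \<sigma> \<notin> \<sigma> ` vars_atom A1"
    using size_subst_var_less_compound_arg[OF s1 c1 s_in s] by (metis imageE less_irrefl)
  then have rhs: "truncate_outside (\<sigma> ` vars_atom A1) (subst_trm s \<sigma>) =
      Fun f (map (\<lambda>u. truncate_trm (subst_trm u \<sigma>)) us)"
    by (simp add: truncate_outside_def sfus)
  have "truncate_outside (\<sigma> ` vars_atom A1) (subst_trm u \<sigma>) = truncate_trm (subst_trm u \<sigma>)"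
    if u: "u \<in> set us" for u
  proof -
    from us u have "var_or_const u" by blast
    then show ?thesis
    proof (cases rule: var_or_const_cases)
      case (Var x)
      then have "x \<in> vars_atom A1"
        using u vars_trm_subset_vars_atom[OF s_in] by (force simp: sfus)
      then show ?thesis
        by (simp add: Var truncate_outside_def)
    qed (simp add: truncate_trm_def)
  qed
  then show ?thesis
    unfolding rhs using us by (simp add: sfus map_subst_trm_truncated_subst cong: map_cong)
qed

lemma is_unifier_truncated_subst:
  assumes s1: "simple_atom A1" and c1: "covering_atom A1"
    and s2: "simple_atom A2" and c2: "covering_atom A2"
    and u: "is_unifier \<sigma> A1 A2" and cc: "contains_compound A1"
  shows "is_unifier (truncated_subst \<sigma> (vars_atom A1)) A1 A2"
  using u
proof (rule is_unifier_argwiseI)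
  fix s t
  assume st: "(s, t) \<in> set (zip (args_atom A1) (args_atom A2))"
    and st_eq: "subst_trm s \<sigma> = subst_trm t \<sigma>"
  have s_in: "s \<in> set (args_atom A1)" and t_in: "t \<in> set (args_atom A2)"
    using st by (auto dest: set_zip_leftD set_zip_rightD)
  note s\<theta> = subst_trm_truncated_subst_arg[OF s1 c1 s_in]
  show "subst_trm s (truncated_subst \<sigma> (vars_atom A1)) =
    subst_trm t (truncated_subst \<sigma> (vars_atom A1))"
  proof (cases "var_or_const t")
    case True
    then show ?thesis
      by (simp add: s\<theta> st_eq subst_trm_truncated_subst_var_or_const)
  next
    case False
    then have t: "is_compound t"
      by (simp add: is_compound_iff)
    then have "is_compound s"
      using unifier_var_or_const_arg_not_compound[OF s1 c1 s2 c2 u cc st] is_compound_iff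
      by blast
    then obtain f us where sfus: "s = Fun f us" and us: "\<forall>u\<in>set us. var_or_const u"
      using simple_covering_compound_arg[OF s1 c1 s_in] by metis
    obtain g ws where tgws: "t = Fun g ws" and ws: "\<forall>w\<in>set ws. var_or_const w"
      using simple_covering_compound_arg[OF s2 c2 t_in t] by metis
    have fg: "f = g" and args: "map (\<lambda>u. subst_trm u \<sigma>) us = map (\<lambda>w. subst_trm w \<sigma>) ws"
      using st_eq by (simp_all add: sfus tgws)
    have "map (\<lambda>u. subst_trm u (truncated_subst \<sigma> (vars_atom A1))) us =
        map (truncate_outside (\<sigma> ` vars_atom A1)) (map (\<lambda>u. subst_trm u \<sigma>) us)"
      using us by (rule map_subst_trm_truncated_subst)
    also have "\<dots> = map (\<lambda>w. subst_trm w (truncated_subst \<sigma> (vars_atom A1))) ws"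
      unfolding args using ws by (rule map_subst_trm_truncated_subst[symmetric])
    finally show ?thesis
      by (simp add: sfus tgws fg)
  qed
qed

lemma is_mgu_var_or_const:
  assumes "is_mgu \<sigma> A B" and "is_unifier \<theta> A B" and "var_or_const (\<theta> x)"
  shows "var_or_const (\<sigma> x)"
proof -
  obtain \<delta> where "\<forall>x. \<theta> x = subst_trm (\<sigma> x) \<delta>"
    using assms(1,2) by (auto simp: is_mgu_def)
  then have "var_or_const (subst_trm (\<sigma> x) \<delta>)"
    using assms(3) by simp
  then show ?thesis
    by (rule var_or_const_subst_trmD)
qed

lemma args_subst_atom: "args_atom (subst_atom A \<sigma>) = map (\<lambda>t. subst_trm t \<sigma>) (args_atom A)"
  by (cases A) auto

lemma atom_of_subst_lit: "atom_of (subst_lit L \<sigma>) = subst_atom (atom_of L) \<sigma>"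
  by (cases L) auto

lemma vars_subst_atom: "vars_atom (subst_atom A \<sigma>) = (\<Union>x\<in>vars_atom A. vars_trm (\<sigma> x))"
  by (auto simp: vars_atom_def args_subst_atom vars_subst_trm)

lemma vars_subst_lit: "vars_lit (subst_lit L \<sigma>) = (\<Union>x\<in>vars_lit L. vars_trm (\<sigma> x))"
  by (simp add: vars_lit_def atom_of_subst_lit vars_subst_atom)

lemma vars_subst_lits: "vars_lits (subst_lits Ls \<sigma>) = (\<Union>x\<in>vars_lits Ls. vars_trm (\<sigma> x))"
  by (auto simp: vars_lits_def subst_lits_def vars_subst_lit)

lemma flat_subst_lit:
  "flat_lit L \<Longrightarrow> \<forall>x\<in>vars_lit L. var_or_const (\<sigma> x) \<Longrightarrow> flat_lit (subst_lit L \<sigma>)"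
  by (fastforce simp: flat_lit_def flat_atom_def atom_of_subst_lit args_subst_atom
      vars_lit_def vars_atom_def intro: var_or_const_subst_trm)

theorem mainTheorem5:
  fixes A1 A2 :: "('p, 'f, 'v) atom"
    and \<sigma> :: "('f, 'v) subst"
    and G :: "('p, 'f, 'v) literal"
    and \<G> :: "('p, 'f, 'v) literal set"
  assumes "simple_atom A1" and "covering_atom A1"
    and "simple_atom A2" and "covering_atom A2"
    and "is_mgu \<sigma> A1 A2"
    and "contains_compound A1"
    and "flat_lit G"
    and "\<forall>L\<in>\<G>. flat_lit L"
    and "vars_atom A1 = vars_lit G"
    and "vars_lit G = vars_lits \<G>"
  shows "flat_lit (subst_lit G \<sigma>)
    \<and> (\<forall>L\<in>subst_lits \<G> \<sigma>. flat_lit L)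
    \<and> vars_atom (subst_atom A1 \<sigma>) = vars_lit (subst_lit G \<sigma>)
    \<and> vars_lit (subst_lit G \<sigma>) = vars_lits (subst_lits \<G> \<sigma>)"
proof -
  have "is_unifier \<sigma> A1 A2"
    using assms(5) by (simp add: is_mgu_def)
  then have "is_unifier (truncated_subst \<sigma> (vars_atom A1)) A1 A2"
    by (rule is_unifier_truncated_subst[OF assms(1-4) _ assms(6)])
  then have flat_\<sigma>: "\<forall>x\<in>vars_atom A1. var_or_const (\<sigma> x)"
    by (blast intro: is_mgu_var_or_const[OF assms(5)] var_or_const_truncated_subst)
  have "flat_lit (subst_lit G \<sigma>)"
    using flat_subst_lit[OF assms(7)] flat_\<sigma> assms(9) by simp
  moreover have "\<forall>L\<in>subst_lits \<G> \<sigma>. flat_lit L"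
    using flat_subst_lit assms(8-10) flat_\<sigma> by (fastforce simp: subst_lits_def vars_lits_def)
  ultimately show ?thesis
    using assms(9,10) by (simp add: vars_subst_atom vars_subst_lit vars_subst_lits)
qed

end
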